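(* Let $\Phi$ be a 2-CNF, and let $\Psi$ be obtained from $\Phi$ by adding a single clause $e$ on the same variable set. Then $$\big|\log Z(\hat\Phi)-\log Z(\hat\Psi)\big|\le|\mathcal N(\Phi,e)|\log 2.$$
   Context: A 2-CNF is a conjunction of clauses, each the disjunction of two literals on two distinct variables. $Z(\cdot)$ is the number of satisfying assignments. **Unit Clause Propagation.** For a 2-CNF $\Phi$ and a set $\mathcal L_0$ of literals, $\mathcal L(\Phi,\mathcal L_0)$ is the closure of $\mathcal L_0$ under: if $\Phi$ has a clause $l\vee\neg l'$ with $l'\in\mathcal L$, add $l$. **Pruning.** Conflict clauses $\mathcal C(\Phi,\mathcal L_0)$ are the clauses of $\Phi$ both of whose variables $x$ satisfy $x,\neg x\in\mathcal L(\Phi,\mathcal L_0)$. The pruned formula $\hat\Phi$ is $\Phi$ with all clauses of $\bigcup_l\mathcal C(\Phi,\{l\})$ removed, $l$ ranging over all literals. Pruned formulas are satisfiable. **The set $\mathcal N(\Phi,e)$.** For a variable $v$, $\mathcal N(\Phi,v)$ is the set of literals $l$ with $\{v,\neg v\}\cap\mathcal L(\Phi,\{l\})\ne\emptyset$. If $v,v'$ are the two variables of $e$, then $$\mathcal N(\Phi,e)=\bigcup_{l\in\mathcal N(\Phi,v)\cup\mathcal N(\Phi,v')}\mathcal L(\Phi,\{l\}),$$ a set of literals. *)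

theory Defs
  imports Complex_Main "HOL-Library.FuncSet"
begin

datatype 'v lit = Pos 'v | Neg 'v

fun var :: "'v lit \<Rightarrow> 'v" where
  "var (Pos x) = x" | "var (Neg x) = x"

fun neg :: "'v lit \<Rightarrow> 'v lit" where
  "neg (Pos x) = Neg x" | "neg (Neg x) = Pos x"

text \<open>A clause is the disjunction of two literals, represented as a pair (a, b) meaning a \<or> b.
  A 2-CNF is a (finite) set of clauses.\<close>
type_synonym 'v clause = "'v lit \<times> 'v lit"
type_synonym 'v cnf2 = "'v clause set"

definition is_clause :: "'v set \<Rightarrow> 'v clause \<Rightarrow> bool" where
  "is_clause V c \<longleftrightarrow> var (fst c) \<in> V \<and> var (snd c) \<in> V \<and> var (fst c) \<noteq> var (snd c)"

definition is_2cnf :: "'v set \<Rightarrow> 'v cnf2 \<Rightarrow> bool" where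
  "is_2cnf V \<Phi> \<longleftrightarrow> (\<forall>c\<in>\<Phi>. is_clause V c)"

fun lit_val :: "('v \<Rightarrow> bool) \<Rightarrow> 'v lit \<Rightarrow> bool" where
  "lit_val \<sigma> (Pos x) = \<sigma> x" | "lit_val \<sigma> (Neg x) = (\<not> \<sigma> x)"

definition satisfies :: "('v \<Rightarrow> bool) \<Rightarrow> 'v cnf2 \<Rightarrow> bool" where
  "satisfies \<sigma> \<Phi> \<longleftrightarrow> (\<forall>(a, b)\<in>\<Phi>. lit_val \<sigma> a \<or> lit_val \<sigma> b)"

definition Z :: "'v set \<Rightarrow> 'v cnf2 \<Rightarrow> nat" where
  "Z V \<Phi> = card {\<sigma> \<in> V \<rightarrow>\<^sub>E (UNIV :: bool set). satisfies \<sigma> \<Phi>}"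

inductive_set ucp :: "'v cnf2 \<Rightarrow> 'v lit set \<Rightarrow> 'v lit set" for \<Phi> L0 where
  base: "l \<in> L0 \<Longrightarrow> l \<in> ucp \<Phi> L0"
| step1: "(a, b) \<in> \<Phi> \<Longrightarrow> neg a \<in> ucp \<Phi> L0 \<Longrightarrow> b \<in> ucp \<Phi> L0"
| step2: "(a, b) \<in> \<Phi> \<Longrightarrow> neg b \<in> ucp \<Phi> L0 \<Longrightarrow> a \<in> ucp \<Phi> L0"

definition conflict :: "'v cnf2 \<Rightarrow> 'v lit set \<Rightarrow> 'v cnf2" where
  "conflict \<Phi> L0 = {c \<in> \<Phi>. \<forall>x \<in> {var (fst c), var (snd c)}.
       Pos x \<in> ucp \<Phi> L0 \<and> Neg x \<in> ucp \<Phi> L0}"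

definition prune :: "'v cnf2 \<Rightarrow> 'v cnf2" where
  "prune \<Phi> = \<Phi> - (\<Union>l. conflict \<Phi> {l})"

definition Nvar :: "'v cnf2 \<Rightarrow> 'v \<Rightarrow> 'v lit set" where
  "Nvar \<Phi> v = {l. {Pos v, Neg v} \<inter> ucp \<Phi> {l} \<noteq> {}}"

definition Nclause :: "'v cnf2 \<Rightarrow> 'v clause \<Rightarrow> 'v lit set" where
  "Nclause \<Phi> e = (\<Union>l \<in> Nvar \<Phi> (var (fst e)) \<union> Nvar \<Phi> (var (snd e)). ucp \<Phi> {l})"

end

theory Submission
  imports Defs
begin

text \<open>Write N for N(\<Phi>, e). N is closed under unit propagation in \<Phi> \<and> e, and the pruned
  formulas of \<Phi> and \<Phi> \<and> e differ only in clauses both of whose variables have both literals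
  in N: adding e only changes what is propagated from literals of N(\<Phi>, v) \<union> N(\<Phi>, v'), and all
  of that stays inside N. So, given a model \<tau> of one pruned formula, every model \<sigma> of the other
  becomes a model of the first when every literal of N whose complement is not in N is made
  true, the variables with both literals in N are copied from \<tau>, and \<sigma> is kept elsewhere. As \<sigma> is
  recovered from its image and its values on the variables of N, the two model counts differ by
  a factor of at most 2^|N|. Both counts are positive, since unit propagation never refutes a
  literal from itself in a pruned formula, which makes it satisfiable.\<close>

lemma neg_neg [simp]: "neg (neg u) = u"
  by (cases u) auto

lemma var_neg [simp]: "var (neg u) = var u"
  by (cases u) auto

lemma neg_neq [simp]: "neg u \<noteq> u"
  by (cases u) auto

lemma lit_mem_var_lits: "u \<in> {Pos (var u), Neg (var u)}"
  by (cases u) auto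

lemma var_eq_var_iff: "var w = var u \<longleftrightarrow> w = u \<or> w = neg u"
  by (cases w; cases u) auto

lemma var_in_var_image_iff: "var u \<in> var ` N \<longleftrightarrow> u \<in> N \<or> neg u \<in> N"
  by (metis image_iff var_eq_var_iff var_neg)

definition clause_vars :: "'v clause \<Rightarrow> 'v set" where
  "clause_vars c = {var (fst c), var (snd c)}"

definition clash_vars :: "'v lit set \<Rightarrow> 'v set" where
  "clash_vars N = {x. Pos x \<in> N \<and> Neg x \<in> N}"

lemma var_in_clash_vars_iff: "var u \<in> clash_vars N \<longleftrightarrow> u \<in> N \<and> neg u \<in> N"
  by (cases u) (auto simp: clash_vars_def)

lemma clash_vars_subset: "clash_vars N \<subseteq> var ` N"
  by (auto simp: clash_vars_def intro: image_eqI[of _ var "Pos _"])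

lemma clash_vars_mono: "K \<subseteq> K' \<Longrightarrow> clash_vars K \<subseteq> clash_vars K'"
  by (auto simp: clash_vars_def)

lemma conflict_eq: "conflict F L = {c \<in> F. clause_vars c \<subseteq> clash_vars (ucp F L)}"
  by (auto simp: conflict_def clause_vars_def clash_vars_def)

lemma is_2cnf_subset: "is_2cnf V G \<Longrightarrow> F \<subseteq> G \<Longrightarrow> is_2cnf V F"
  by (auto simp: is_2cnf_def)

lemma is_2cnf_insert: "is_2cnf V F \<Longrightarrow> is_clause V e \<Longrightarrow> is_2cnf V (insert e F)"
  by (simp add: is_2cnf_def)

lemma prune_subset: "prune F \<subseteq> F"
  by (auto simp: prune_def)

definition ucp_closed :: "'v cnf2 \<Rightarrow> 'v lit set \<Rightarrow> bool" where
  "ucp_closed F K \<longleftrightarrow> (\<forall>(a, b) \<in> F. (neg a \<in> K \<longrightarrow> b \<in> K) \<and> (neg b \<in> K \<longrightarrow> a \<in> K))"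

lemma ucp_closed_subset: "ucp_closed G K \<Longrightarrow> F \<subseteq> G \<Longrightarrow> ucp_closed F K"
  by (auto simp: ucp_closed_def)

lemma ucp_closed_ucp: "ucp_closed F (ucp F L)"
  by (auto simp: ucp_closed_def intro: ucp.intros)

lemma ucp_least: "ucp_closed F K \<Longrightarrow> L \<subseteq> K \<Longrightarrow> ucp F L \<subseteq> K"
proof
  fix u assume "ucp_closed F K" "L \<subseteq> K" "u \<in> ucp F L"
  then show "u \<in> K"
    by (induction rule: ucp.induct[OF \<open>u \<in> ucp F L\<close>]) (auto simp: ucp_closed_def)
qed

lemma ucp_base: "l \<in> ucp F {l}"
  by (simp add: ucp.base)

lemma ucp_mono: "u \<in> ucp F L \<Longrightarrow> F \<subseteq> G \<Longrightarrow> u \<in> ucp G L"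
  by (induction rule: ucp.induct) (auto intro: ucp.intros)

lemma ucp_subset_ucp: "u \<in> ucp F {l} \<Longrightarrow> ucp F {u} \<subseteq> ucp F {l}"
  by (simp add: ucp_closed_ucp ucp_least)

lemma ucp_contrapos: "u \<in> ucp F {l} \<Longrightarrow> neg l \<in> ucp F {neg u}"
proof (induction rule: ucp.induct)
  case (base l')
  then show ?case by (simp add: ucp_base)
next
  case (step1 a b)
  have "a \<in> ucp F {neg b}" using step1(1) by (auto intro: ucp.intros)
  with step1.IH show ?case using ucp_subset_ucp by fastforce
next
  case (step2 a b)
  have "b \<in> ucp F {neg a}" using step2(1) by (auto intro: ucp.intros)
  with step2.IH show ?case using ucp_subset_ucp by fastforce
qed

lemma ucp_var_in: "u \<in> ucp F L \<Longrightarrow> is_2cnf V F \<Longrightarrow> u \<in> L \<or> var u \<in> V"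
  by (induction rule: ucp.induct) (force simp: is_2cnf_def is_clause_def)+

lemma ucp_start_var_in: "is_2cnf V F \<Longrightarrow> u \<in> ucp F {l} \<Longrightarrow> var u \<in> V \<Longrightarrow> var l \<in> V"
  using ucp_var_in[OF ucp_contrapos] by (metis neg_neg singletonD var_neg)

lemma clash_vars_ucp_empty:
  assumes "\<forall>l. neg l \<notin> ucp F {l}"
  shows "clash_vars (ucp F {l}) = {}"
proof -
  have consistent: "neg u \<notin> ucp F {l}" if "u \<in> ucp F {l}" for u
  proof
    assume "neg u \<in> ucp F {l}"
    then have "ucp F {neg u} \<subseteq> ucp F {l}" by (rule ucp_subset_ucp)
    moreover have "neg l \<in> ucp F {neg u}" using that by (rule ucp_contrapos)
    ultimately show False using assms by blast
  qed
  then show ?thesis by (auto simp: clash_vars_def dest: consistent[of "Pos _"])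
qed

definition patch :: "'v lit set \<Rightarrow> ('v \<Rightarrow> bool) \<Rightarrow> ('v \<Rightarrow> bool) \<Rightarrow> 'v \<Rightarrow> bool" where
  "patch N \<tau> \<sigma> x =
     (if x \<in> clash_vars N then \<tau> x else if Pos x \<in> N then True else if Neg x \<in> N then False else \<sigma> x)"

lemma lit_val_patch_clash: "var u \<in> clash_vars N \<Longrightarrow> lit_val (patch N \<tau> \<sigma>) u = lit_val \<tau> u"
  by (cases u) (auto simp: patch_def)

lemma lit_val_patch_mem: "u \<in> N \<Longrightarrow> var u \<notin> clash_vars N \<Longrightarrow> lit_val (patch N \<tau> \<sigma>) u"
  by (cases u) (auto simp: patch_def clash_vars_def)

lemma patch_outside: "x \<notin> var ` N \<Longrightarrow> patch N \<tau> \<sigma> x = \<sigma> x"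
  by (auto simp: patch_def clash_vars_def intro: image_eqI[of _ var "Pos _"] image_eqI[of _ var "Neg _"])

lemma lit_val_patch_outside: "var u \<notin> var ` N \<Longrightarrow> lit_val (patch N \<tau> \<sigma>) u = lit_val \<sigma> u"
  by (cases u) (auto simp: patch_outside)

lemma patch_PiE: "\<sigma> \<in> V \<rightarrow>\<^sub>E (UNIV :: bool set) \<Longrightarrow> var ` N \<subseteq> V \<Longrightarrow> patch N \<tau> \<sigma> \<in> V \<rightarrow>\<^sub>E UNIV"
  by (auto simp: patch_def PiE_def extensional_def clash_vars_def
      intro: image_eqI[of _ var "Pos _"] image_eqI[of _ var "Neg _"])

text \<open>Closure is what rules out a clause with one clashing and one untouched variable:
  \<not>p \<in> N forces q \<in> N.\<close>
lemma patch_clause_cases: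
  assumes "ucp_closed F N" "(p, q) \<in> F"
  shows "lit_val (patch N \<tau> \<sigma>) p \<or> lit_val (patch N \<tau> \<sigma>) q
    \<or> clause_vars (p, q) \<subseteq> clash_vars N \<or> clause_vars (p, q) \<inter> var ` N = {}"
proof -
  have clos: "neg p \<in> N \<Longrightarrow> q \<in> N" "neg q \<in> N \<Longrightarrow> p \<in> N"
    using assms by (auto simp: ucp_closed_def)
  show ?thesis
  proof (rule ccontr)
    assume "\<not> ?thesis"
    then have "p \<in> N \<Longrightarrow> var p \<in> clash_vars N" "q \<in> N \<Longrightarrow> var q \<in> clash_vars N"
      and "\<not> clause_vars (p, q) \<subseteq> clash_vars N" "clause_vars (p, q) \<inter> var ` N \<noteq> {}"
      using lit_val_patch_mem by blast+
    with clos clash_vars_subset show False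
      by (auto simp: clause_vars_def var_in_var_image_iff var_in_clash_vars_iff)
  qed
qed

text \<open>2-SAT: if propagation never refutes a literal from itself, then setting a variable x to true,
  fixing everything propagated from it and recursing on the untouched clauses never gets stuck.\<close>
lemma satisfiable_if_ucp_consistent:
  assumes "finite V" "is_2cnf V F" "\<forall>l. neg l \<notin> ucp F {l}"
  shows "\<exists>\<sigma>. satisfies \<sigma> F"
  using assms
proof (induction "card V" arbitrary: V F rule: less_induct)
  case less
  show ?case
  proof (cases "V = {}")
    case True
    then have "F = {}" using less.prems(2) by (auto simp: is_2cnf_def is_clause_def)
    then show ?thesis by (auto simp: satisfies_def)
  next
    case False
    then obtain x where "x \<in> V" by blast
    define L where "L = ucp F {Pos x}"
    define F' where "F' = {c \<in> F. clause_vars c \<inter> var ` L = {}}"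
    have "var ` L \<subseteq> V"
      using ucp_var_in[OF _ less.prems(2)] \<open>x \<in> V\<close> by (force simp: L_def)
    moreover have "x \<in> var ` L"
      using ucp_base by (force simp: L_def)
    ultimately have "card (V - var ` L) < card V"
      using less.prems(1) by (intro psubset_card_mono) auto
    moreover have "is_2cnf (V - var ` L) F'"
      using less.prems(2) by (auto simp: F'_def is_2cnf_def is_clause_def clause_vars_def)
    moreover have "\<forall>l. neg l \<notin> ucp F' {l}"
      using less.prems(3) ucp_mono[of _ F'] by (auto simp: F'_def)
    ultimately obtain \<sigma> where \<sigma>: "satisfies \<sigma> F'"
      using less.hyps less.prems(1) by blast
    have "lit_val (patch L \<sigma> \<sigma>) p \<or> lit_val (patch L \<sigma> \<sigma>) q" if pq: "(p, q) \<in> F" for p q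
    proof -
      have "clash_vars L = {}"
        unfolding L_def using less.prems(3) by (rule clash_vars_ucp_empty)
      then have "lit_val (patch L \<sigma> \<sigma>) p \<or> lit_val (patch L \<sigma> \<sigma>) q \<or> clause_vars (p, q) \<inter> var ` L = {}"
        using patch_clause_cases[OF ucp_closed_ucp pq, of "{Pos x}"] by (auto simp: L_def clause_vars_def)
      moreover have "lit_val (patch L \<sigma> \<sigma>) p \<or> lit_val (patch L \<sigma> \<sigma>) q"
        if untouched: "clause_vars (p, q) \<inter> var ` L = {}"
      proof -
        have "(p, q) \<in> F'" using pq untouched by (simp add: F'_def)
        then have "lit_val \<sigma> p \<or> lit_val \<sigma> q" using \<sigma> by (auto simp: satisfies_def)
        then show ?thesis using untouched lit_val_patch_outside by (auto simp: clause_vars_def)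
      qed
      ultimately show ?thesis by blast
    qed
    then have "satisfies (patch L \<sigma> \<sigma>) F" by (auto simp: satisfies_def)
    then show ?thesis by blast
  qed
qed

text \<open>Deriving \<not>l from l needs a last clause (a, \<not>l) with \<not>a propagated; then a is propagated
  too, so that clause is a conflict clause of F for {l} and has been pruned.\<close>
lemma neg_notin_ucp_prune: "neg l \<notin> ucp (prune F) {l}"
proof
  let ?K = "ucp (prune F) {l}"
  assume neg_l: "neg l \<in> ?K"
  have l: "l \<in> ?K" by (rule ucp_base)
  have var_l: "var l \<in> clash_vars ?K"
    using l neg_l by (simp add: var_in_clash_vars_iff)
  have "\<exists>c \<in> prune F. clause_vars c \<subseteq> clash_vars ?K"
    using neg_l
  proof cases
    case (step1 a)
    then have "a \<in> ?K" using l by (metis neg_neg ucp.step2)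
    then have "var a \<in> clash_vars ?K"
      using step1(2) by (simp add: var_in_clash_vars_iff)
    then show ?thesis
      using step1(1) var_l by (intro bexI[of _ "(a, neg l)"]) (auto simp: clause_vars_def)
  next
    case (step2 b)
    then have "b \<in> ?K" using l by (metis neg_neg ucp.step1)
    then have "var b \<in> clash_vars ?K"
      using step2(2) by (simp add: var_in_clash_vars_iff)
    then show ?thesis
      using step2(1) var_l by (intro bexI[of _ "(neg l, b)"]) (auto simp: clause_vars_def)
  qed simp
  then obtain c where c: "c \<in> prune F" "clause_vars c \<subseteq> clash_vars ?K"
    by blast
  moreover have "clash_vars ?K \<subseteq> clash_vars (ucp F {l})"
    using ucp_mono[OF _ prune_subset] by (intro clash_vars_mono) blast
  ultimately have "c \<in> conflict F {l}"
    using prune_subset by (auto simp: conflict_eq)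
  with c(1) show False
    by (auto simp: prune_def)
qed

lemma prune_satisfiable: "finite V \<Longrightarrow> is_2cnf V F \<Longrightarrow> \<exists>\<sigma>. satisfies \<sigma> (prune F)"
  by (metis satisfiable_if_ucp_consistent is_2cnf_subset prune_subset neg_notin_ucp_prune)

lemma lit_val_restrict: "var u \<in> V \<Longrightarrow> lit_val (restrict \<sigma> V) u = lit_val \<sigma> u"
  by (cases u) auto

lemma Z_pos_if_satisfies:
  assumes "finite V" "is_2cnf V F" "satisfies \<sigma> F"
  shows "0 < Z V F"
proof -
  have "lit_val (restrict \<sigma> V) p \<or> lit_val (restrict \<sigma> V) q" if pq: "(p, q) \<in> F" for p q
  proof -
    have "var p \<in> V" "var q \<in> V"
      using assms(2) pq by (auto simp: is_2cnf_def is_clause_def)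
    then show ?thesis
      using assms(3) pq by (auto simp: satisfies_def lit_val_restrict)
  qed
  then have "satisfies (restrict \<sigma> V) F"
    unfolding satisfies_def by blast
  then have "{\<tau> \<in> V \<rightarrow>\<^sub>E (UNIV :: bool set). satisfies \<tau> F} \<noteq> {}"
    by (metis (mono_tags, lifting) UNIV_I empty_iff mem_Collect_eq restrict_PiE_iff)
  moreover have "finite {\<tau> \<in> V \<rightarrow>\<^sub>E (UNIV :: bool set). satisfies \<tau> F}"
    using assms(1) by (simp add: finite_PiE)
  ultimately show ?thesis
    unfolding Z_def by (simp add: card_gt_0_iff)
qed

lemma Z_prune_pos: "finite V \<Longrightarrow> is_2cnf V F \<Longrightarrow> 0 < Z V (prune F)"
  by (metis Z_pos_if_satisfies is_2cnf_subset prune_subset prune_satisfiable)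

lemma card_le_card_mult_pow:
  assumes "finite U" "finite B" "A \<subseteq> V \<rightarrow>\<^sub>E (UNIV :: bool set)" "f ` A \<subseteq> B"
    and agree: "\<And>\<sigma> y. \<sigma> \<in> A \<Longrightarrow> y \<in> V - U \<Longrightarrow> f \<sigma> y = \<sigma> y"
  shows "card A \<le> card B * 2 ^ card U"
proof -
  let ?g = "\<lambda>\<sigma>. (f \<sigma>, restrict \<sigma> U)"
  have "inj_on ?g A"
  proof (rule inj_onI)
    fix \<sigma>1 \<sigma>2 assume \<sigma>: "\<sigma>1 \<in> A" "\<sigma>2 \<in> A" "?g \<sigma>1 = ?g \<sigma>2"
    show "\<sigma>1 = \<sigma>2"
    proof
      fix y
      consider "y \<in> U" | "y \<in> V - U" | "y \<notin> V" by blast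
      then show "\<sigma>1 y = \<sigma>2 y"
      proof cases
        case 1
        then show ?thesis using \<sigma>(3) by (metis prod.inject restrict_apply')
      next
        case 2
        then show ?thesis using \<sigma> agree by (metis prod.inject)
      next
        case 3
        then show ?thesis using \<sigma>(1,2) assms(3) by (metis PiE_arb subsetD)
      qed
    qed
  qed
  moreover have "?g ` A \<subseteq> B \<times> (U \<rightarrow>\<^sub>E (UNIV :: bool set))"
    using assms(4) by auto
  ultimately have "card A \<le> card (B \<times> (U \<rightarrow>\<^sub>E (UNIV :: bool set)))"
    using assms(1,2) by (intro card_inj_on_le) (auto simp: finite_PiE)
  also have "\<dots> = card B * 2 ^ card U"
    using assms(1) by (simp add: card_cartesian_product card_PiE)
  finally show ?thesis .
qed

text \<open>Patching a model of S on the variables of N by a model \<tau> of T gives a model of T, and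
  it can be undone knowing the original values on var ` N.\<close>
lemma Z_le_pow_card_mult_Z:
  assumes "finite V" "var ` N \<subseteq> V" "ucp_closed T N" "satisfies \<tau> T"
    and diff: "\<And>c. c \<in> T \<Longrightarrow> c \<notin> S \<Longrightarrow> clause_vars c \<subseteq> clash_vars N"
  shows "Z V S \<le> 2 ^ card (var ` N) * Z V T"
proof -
  let ?A = "{\<sigma> \<in> V \<rightarrow>\<^sub>E (UNIV :: bool set). satisfies \<sigma> S}"
  let ?B = "{\<sigma> \<in> V \<rightarrow>\<^sub>E (UNIV :: bool set). satisfies \<sigma> T}"
  have "satisfies (patch N \<tau> \<sigma>) T" if "satisfies \<sigma> S" for \<sigma>
  proof -
    have "lit_val (patch N \<tau> \<sigma>) p \<or> lit_val (patch N \<tau> \<sigma>) q" if pq: "(p, q) \<in> T" for p q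
    proof -
      consider "lit_val (patch N \<tau> \<sigma>) p \<or> lit_val (patch N \<tau> \<sigma>) q"
        | "clause_vars (p, q) \<subseteq> clash_vars N" | "clause_vars (p, q) \<inter> var ` N = {}"
        using patch_clause_cases[OF assms(3) pq] by blast
      then show ?thesis
      proof cases
        case 2
        then show ?thesis
          using assms(4) pq lit_val_patch_clash by (fastforce simp: satisfies_def clause_vars_def)
      next
        case 3
        then have "(p, q) \<in> S"
          using diff[OF pq] clash_vars_subset[of N] by (auto simp: clause_vars_def)
        then show ?thesis
          using 3 \<open>satisfies \<sigma> S\<close> lit_val_patch_outside by (fastforce simp: satisfies_def clause_vars_def)
      qed
    qed
    then show ?thesis by (auto simp: satisfies_def)
  qed
  moreover have "patch N \<tau> \<sigma> \<in> V \<rightarrow>\<^sub>E UNIV" if "\<sigma> \<in> V \<rightarrow>\<^sub>E UNIV" for \<sigma>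
    using patch_PiE[OF that assms(2)] .
  ultimately have "(\<lambda>\<sigma>. patch N \<tau> \<sigma>) ` ?A \<subseteq> ?B"
    by blast
  then have "card ?A \<le> card ?B * 2 ^ card (var ` N)"
    using assms(1,2)
    by (intro card_le_card_mult_pow[where V = V and f = "patch N \<tau>"])
      (auto simp: finite_PiE patch_outside intro: finite_subset)
  then show ?thesis
    by (simp add: Z_def mult.commute)
qed

lemma conflict_mono:
  assumes "F \<subseteq> G"
  shows "conflict F L \<subseteq> conflict G L"
proof -
  have "clash_vars (ucp F L) \<subseteq> clash_vars (ucp G L)"
    using ucp_mono assms by (intro clash_vars_mono) blast
  then show ?thesis
    using assms by (auto simp: conflict_eq)
qed

lemma finite_if_finite_var_image: "finite (var ` N) \<Longrightarrow> finite N"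
proof (rule finite_subset)
  show "N \<subseteq> Pos ` var ` N \<union> Neg ` var ` N"
  proof
    fix u assume "u \<in> N"
    then show "u \<in> Pos ` var ` N \<union> Neg ` var ` N"
      using lit_mem_var_lits[of u] by auto
  qed
qed simp

lemma lit_in_Nclause: "var u \<in> clause_vars e \<Longrightarrow> u \<in> Nclause \<Phi> e"
  using lit_mem_var_lits[of u] ucp_base[of u \<Phi>]
  by (auto simp: Nclause_def Nvar_def clause_vars_def)

lemma clause_vars_subset_clash_Nclause: "clause_vars e \<subseteq> clash_vars (Nclause \<Phi> e)"
  by (auto simp: clash_vars_def intro!: lit_in_Nclause)

lemma ucp_closed_Nclause: "ucp_closed (insert e \<Phi>) (Nclause \<Phi> e)"
proof -
  have "ucp_closed \<Phi> (Nclause \<Phi> e)"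
    using ucp_closed_ucp[of \<Phi>] by (fastforce simp: ucp_closed_def Nclause_def)
  moreover have "fst e \<in> Nclause \<Phi> e" "snd e \<in> Nclause \<Phi> e"
    by (simp_all add: lit_in_Nclause clause_vars_def)
  ultimately show ?thesis
    by (auto simp: ucp_closed_def)
qed

lemma ucp_insert_eq:
  assumes "l \<notin> Nvar \<Phi> (var (fst e)) \<union> Nvar \<Phi> (var (snd e))"
  shows "ucp (insert e \<Phi>) {l} = ucp \<Phi> {l}"
proof
  have "neg (fst e) \<notin> ucp \<Phi> {l}" "neg (snd e) \<notin> ucp \<Phi> {l}"
    using assms lit_mem_var_lits[of "neg (fst e)"] lit_mem_var_lits[of "neg (snd e)"]
    by (auto simp: Nvar_def)
  then have "ucp_closed (insert e \<Phi>) (ucp \<Phi> {l})"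
    using ucp_closed_ucp[of \<Phi>] by (auto simp: ucp_closed_def)
  then show "ucp (insert e \<Phi>) {l} \<subseteq> ucp \<Phi> {l}"
    by (rule ucp_least) (simp add: ucp_base)
  show "ucp \<Phi> {l} \<subseteq> ucp (insert e \<Phi>) {l}"
    using ucp_mono by blast
qed

lemma ucp_insert_subset_Nclause:
  assumes "l \<in> Nvar \<Phi> (var (fst e)) \<union> Nvar \<Phi> (var (snd e))"
  shows "ucp (insert e \<Phi>) {l} \<subseteq> Nclause \<Phi> e"
proof (rule ucp_least[OF ucp_closed_Nclause])
  show "{l} \<subseteq> Nclause \<Phi> e"
    using assms ucp_base[of l \<Phi>] by (auto simp: Nclause_def)
qed

text \<open>Adding e can only create conflicts for literals l of N(\<Phi>, e), and these lie inside
  N(\<Phi>, e) since N(\<Phi>, e) is closed under propagation in \<Phi> \<and> e.\<close>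
lemma prune_insert_agree:
  assumes "\<not> clause_vars c \<subseteq> clash_vars (Nclause \<Phi> e)"
  shows "c \<in> prune (insert e \<Phi>) \<longleftrightarrow> c \<in> prune \<Phi>"
proof
  assume c: "c \<in> prune (insert e \<Phi>)"
  moreover have "c \<noteq> e"
    using assms clause_vars_subset_clash_Nclause[of e \<Phi>] by blast
  ultimately show "c \<in> prune \<Phi>"
    using conflict_mono[of \<Phi> "insert e \<Phi>"] by (auto simp: prune_def)
next
  assume c: "c \<in> prune \<Phi>"
  have "c \<notin> conflict (insert e \<Phi>) {l}" for l
  proof (cases "l \<in> Nvar \<Phi> (var (fst e)) \<union> Nvar \<Phi> (var (snd e))")
    case True
    then have "clash_vars (ucp (insert e \<Phi>) {l}) \<subseteq> clash_vars (Nclause \<Phi> e)"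
      by (intro clash_vars_mono ucp_insert_subset_Nclause)
    then show ?thesis
      using assms by (auto simp: conflict_eq)
  next
    case False
    then show ?thesis
      using c ucp_insert_eq[OF False] by (auto simp: conflict_eq prune_def)
  qed
  then show "c \<in> prune (insert e \<Phi>)"
    using c by (auto simp: prune_def)
qed

lemma Nclause_vars:
  assumes "is_2cnf V \<Phi>" "is_clause V e"
  shows "var ` Nclause \<Phi> e \<subseteq> V"
proof
  fix x assume "x \<in> var ` Nclause \<Phi> e"
  then obtain u l v where u: "u \<in> ucp \<Phi> {l}" "x = var u" and v: "v \<in> clause_vars e"
    and l: "{Pos v, Neg v} \<inter> ucp \<Phi> {l} \<noteq> {}"
    by (auto simp: Nclause_def Nvar_def clause_vars_def)
  have "v \<in> V"
    using v assms(2) by (auto simp: clause_vars_def is_clause_def)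
  moreover obtain w where "w \<in> ucp \<Phi> {l}" "var w = v"
    using l by auto
  ultimately have "var l \<in> V"
    using ucp_start_var_in[OF assms(1)] by blast
  then show "x \<in> V"
    using u ucp_var_in[OF u(1) assms(1)] by auto
qed

lemma abs_ln_diff_le_ln:
  fixes x y c :: real
  assumes "0 < x" "0 < y" "x \<le> c * y" "y \<le> c * x"
  shows "\<bar>ln x - ln y\<bar> \<le> ln c"
proof -
  have "0 < c"
    using assms mult_nonpos_nonneg[of c y] by linarith
  then have "ln x \<le> ln (c * y)" "ln y \<le> ln (c * x)"
    using assms by simp_all
  then have "ln x \<le> ln c + ln y" "ln y \<le> ln c + ln x"
    using assms \<open>0 < c\<close> by (simp_all add: ln_mult)
  then show ?thesis by linarith
qed

theorem lemma11p1:
  fixes V :: "'v set" and \<Phi> :: "'v cnf2" and e :: "'v clause"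
  assumes "finite V"
    and "is_2cnf V \<Phi>"
    and "is_clause V e"
  shows "\<bar>ln (real (Z V (prune \<Phi>))) - ln (real (Z V (prune (insert e \<Phi>))))\<bar>
           \<le> real (card (Nclause \<Phi> e)) * ln 2"
proof -
  let ?N = "Nclause \<Phi> e" and ?\<Psi> = "insert e \<Phi>" and ?k = "card (var ` Nclause \<Phi> e)"
  have \<Psi>: "is_2cnf V ?\<Psi>"
    using assms(2,3) by (rule is_2cnf_insert)
  have N: "var ` ?N \<subseteq> V"
    using assms(2,3) by (rule Nclause_vars)
  have closed: "ucp_closed (prune \<Phi>) ?N" "ucp_closed (prune ?\<Psi>) ?N"
    using prune_subset[of \<Phi>] prune_subset[of ?\<Psi>]
    by (auto intro: ucp_closed_subset[OF ucp_closed_Nclause])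
  obtain \<tau>\<Phi> \<tau>\<Psi> where \<tau>: "satisfies \<tau>\<Phi> (prune \<Phi>)" "satisfies \<tau>\<Psi> (prune ?\<Psi>)"
    using prune_satisfiable[OF assms(1,2)] prune_satisfiable[OF assms(1) \<Psi>] by blast
  have "Z V (prune \<Phi>) \<le> 2 ^ ?k * Z V (prune ?\<Psi>)"
    by (rule Z_le_pow_card_mult_Z[OF assms(1) N closed(2) \<tau>(2)]) (metis prune_insert_agree)
  then have "real (Z V (prune \<Phi>)) \<le> 2 ^ ?k * real (Z V (prune ?\<Psi>))"
    using of_nat_mono by fastforce
  moreover have "Z V (prune ?\<Psi>) \<le> 2 ^ ?k * Z V (prune \<Phi>)"
    by (rule Z_le_pow_card_mult_Z[OF assms(1) N closed(1) \<tau>(1)]) (metis prune_insert_agree)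
  then have "real (Z V (prune ?\<Psi>)) \<le> 2 ^ ?k * real (Z V (prune \<Phi>))"
    using of_nat_mono by fastforce
  ultimately have "\<bar>ln (Z V (prune \<Phi>)) - ln (Z V (prune ?\<Psi>))\<bar> \<le> ln (2 ^ ?k)"
    using Z_prune_pos[OF assms(1,2)] Z_prune_pos[OF assms(1) \<Psi>] by (intro abs_ln_diff_le_ln) simp_all
  also have "\<dots> \<le> card ?N * ln 2"
    using card_image_le[OF finite_if_finite_var_image] finite_subset[OF N assms(1)]
    by (simp add: ln_realpow)
  finally show ?thesis .
qed

end
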